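(* There is $p=O(\log n)$ such that $D^{p}(\textsc{IndSub}(\text{co-}P_3))=\tilde O(n)$.
   Context: $\text{co-}P_3$ is the complement of the path on three vertices (one edge plus an isolated vertex). Insertion-only streaming model: the edges of an $n$-vertex undirected input graph $G$ arrive as a stream in arbitrary order; the algorithm knows $n$, makes $p$ passes, and has $S$ bits of memory. $\textsc{IndSub}(H)$: decide whether $G$ contains $H$ as an induced subgraph and if so output the vertex set of a copy. $D^p(\Pi)$ is the minimum space of a deterministic $p$-pass streaming algorithm solving $\Pi$. $\tilde O$ hides polylogarithmic factors in $n$. *)

theory Defs
  imports Main "HOL-Library.Landau_Symbols"
begin

text \<open>Streams: an n-vertex simple undirected graph on vertex set {0..<n} is given as a
list of its edges (2-element vertex sets), each edge exactly once, in arbitrary order.\<close>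

definition valid_stream :: "nat \<Rightarrow> nat set list \<Rightarrow> bool" where
  "valid_stream n xs \<longleftrightarrow> distinct xs \<and>
     (\<forall>e\<in>set xs. \<exists>u v. u \<noteq> v \<and> u < n \<and> v < n \<and> e = {u, v})"

text \<open>T is the vertex set of an induced copy of co-P3 (one edge plus an isolated vertex)
in the graph with edge set E.\<close>

definition is_induced_coP3 :: "nat \<Rightarrow> nat set set \<Rightarrow> nat set \<Rightarrow> bool" where
  "is_induced_coP3 n E T \<longleftrightarrow> (\<exists>a b c. a < n \<and> b < n \<and> c < n \<and>
      a \<noteq> b \<and> a \<noteq> c \<and> b \<noteq> c \<and>
      {a, b} \<in> E \<and> {a, c} \<notin> E \<and> {b, c} \<notin> E \<and> T = {a, b, c})"

text \<open>A deterministic p-pass streaming algorithm with memory states = bit strings.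
  init: initial memory; step i s e: update in pass i on reading edge e;
  endpass i s: processing at the end of pass i; out: final output.\<close>

fun run_passes :: "(nat \<Rightarrow> 's \<Rightarrow> 'e \<Rightarrow> 's) \<Rightarrow> (nat \<Rightarrow> 's \<Rightarrow> 's) \<Rightarrow> 'e list \<Rightarrow> nat \<Rightarrow> 's \<Rightarrow> 's" where
  "run_passes step endpass xs 0 s = s"
| "run_passes step endpass xs (Suc k) s =
     endpass k (fold (\<lambda>e t. step k t e) xs (run_passes step endpass xs k s))"

definition uses_space :: "nat \<Rightarrow> bool list \<Rightarrow> (nat \<Rightarrow> bool list \<Rightarrow> nat set \<Rightarrow> bool list)
     \<Rightarrow> (nat \<Rightarrow> bool list \<Rightarrow> bool list) \<Rightarrow> bool" where
  "uses_space S init step endpass \<longleftrightarrow> length init = S \<and>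
     (\<forall>i s e. length s = S \<longrightarrow> length (step i s e) = S) \<and>
     (\<forall>i s. length s = S \<longrightarrow> length (endpass i s) = S)"

definition solves_IndSub_coP3 :: "nat \<Rightarrow> nat \<Rightarrow> bool list \<Rightarrow> (nat \<Rightarrow> bool list \<Rightarrow> nat set \<Rightarrow> bool list)
     \<Rightarrow> (nat \<Rightarrow> bool list \<Rightarrow> bool list) \<Rightarrow> (bool list \<Rightarrow> nat set option) \<Rightarrow> bool" where
  "solves_IndSub_coP3 n p init step endpass out \<longleftrightarrow>
     (\<forall>xs. valid_stream n xs \<longrightarrow>
        (case out (run_passes step endpass xs p init) of
           None \<Rightarrow> \<not> (\<exists>T. is_induced_coP3 n (set xs) T)
         | Some T \<Rightarrow> is_induced_coP3 n (set xs) T))"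

definition det_stream_alg_IndSub_coP3 :: "nat \<Rightarrow> nat \<Rightarrow> nat \<Rightarrow> bool" where
  "det_stream_alg_IndSub_coP3 n p S \<longleftrightarrow>
     (\<exists>init step endpass out. uses_space S init step endpass \<and>
        solves_IndSub_coP3 n p init step endpass out)"

end

theory Submission
  imports Defs "HOL-Library.Log_Nat" "HOL-Real_Asymp.Real_Asymp"
begin

text \<open>A graph has no induced co-P3 iff non-adjacency is an equivalence relation. Let
  \<open>\<lambda>(v)\<close> be the least non-neighbour of v; as there are no loops, \<open>\<lambda>(v) \<le> v\<close>. Since
  \<open>\<lambda>(v) < t\<close> iff v has fewer than t neighbours below t, a binary search with one counter per
  vertex finds all \<open>\<lambda>(v)\<close> in O(log n) passes. An edge ab with \<open>\<lambda>(a) = \<lambda>(b)\<close> yields the copy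
  \<open>{a, b, \<lambda>(a)}\<close>. Otherwise the parts \<open>{w. \<lambda>(w) = \<lambda>(v)}\<close> are independent, so each lies in the
  non-neighbourhood of its members, and counting degrees in one more pass tells whether it is all
  of it. If so for every v, non-adjacency is an equivalence relation. If not for v, then v has a
  non-neighbour w with \<open>\<lambda>(w) \<noteq> \<lambda>(v)\<close>, found in a last pass, and \<open>{v, w, min \<lambda>(v) \<lambda>(w)}\<close> is an
  induced co-P3. The state consists of 2n + 3 numbers below n + 3, that is O(n log n) bits.\<close>

section \<open>Fixed-width binary encoding of number lists\<close>

definition encode_cells :: "nat \<Rightarrow> nat \<Rightarrow> nat list \<Rightarrow> bool list" where
  "encode_cells S b cs = take S (concat (map (\<lambda>x. map (bit x) [0..<b]) cs) @ replicate S False)"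

definition decode_cells :: "nat \<Rightarrow> nat \<Rightarrow> bool list \<Rightarrow> nat list" where
  "decode_cells b m bs = map (\<lambda>j. horner_sum of_bool 2 (take b (drop (j * b) bs))) [0..<m]"

lemma length_encode_cells [simp]: "length (encode_cells S b cs) = S"
  by (simp add: encode_cells_def)

lemma take_drop_concat_uniform:
  assumes "\<forall>ys\<in>set yss. length ys = b" and "j < length yss"
  shows "take b (drop (j * b) (concat yss @ zs)) = yss ! j"
  using assms
proof (induction yss arbitrary: j)
  case Nil
  then show ?case by simp
next
  case (Cons ys yss)
  then show ?case by (cases j) simp_all
qed

lemma decode_encode_cells:
  assumes "length cs * b \<le> S" and "\<forall>x\<in>set cs. x < 2 ^ b"
  shows "decode_cells b (length cs) (encode_cells S b cs) = cs"
proof (rule nth_equalityI)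
  fix j assume "j < length (decode_cells b (length cs) (encode_cells S b cs))"
  then have j: "j < length cs" by (simp add: decode_cells_def)
  define yss where "yss = map (\<lambda>x. map (bit x) [0..<b]) cs"
  have "length (concat yss) = length cs * b"
    unfolding yss_def by (induction cs) auto
  then have "encode_cells S b cs = concat yss @ replicate (S - length cs * b) False"
    using assms(1) by (simp add: encode_cells_def yss_def)
  moreover have "take b (drop (j * b) (concat yss @ replicate (S - length cs * b) False)) = yss ! j"
    by (rule take_drop_concat_uniform) (simp_all add: yss_def j)
  ultimately have "take b (drop (j * b) (encode_cells S b cs)) = map (bit (cs ! j)) [0..<b]"
    using j by (simp add: yss_def)
  then show "decode_cells b (length cs) (encode_cells S b cs) ! j = cs ! j"
    using j assms(2) by (simp add: decode_cells_def horner_sum_bit_eq_take_bit take_bit_nat_eq_self)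
qed (simp add: decode_cells_def)

section \<open>Streaming algorithms on bit strings\<close>

lemma run_passes_invariant:
  assumes "\<And>i s e. I s \<Longrightarrow> I (step i s e)" and "\<And>i s. I s \<Longrightarrow> I (endpass i s)"
    and "I s"
  shows "I (run_passes step endpass xs k s)"
proof (induction k)
  case (Suc k)
  then show ?case
    using assms(1,2) by (simp add: fold_invariant[where Q = "\<lambda>_. True"])
qed (simp add: assms(3))

lemma fold_simulation:
  assumes "\<And>s. I s \<Longrightarrow> dec (enc s) = s" and "\<And>s e. I s \<Longrightarrow> I (f s e)" and "I s"
  shows "fold (\<lambda>e t. enc (f (dec t) e)) xs (enc s) = enc (fold (\<lambda>e t. f t e) xs s)"
  using assms(3)
proof (induction xs arbitrary: s)
  case (Cons x xs)
  then show ?case using assms(1,2) by simp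
qed simp

lemma run_passes_simulation:
  assumes dec_enc: "\<And>s. I s \<Longrightarrow> dec (enc s) = s"
    and step: "\<And>i s e. I s \<Longrightarrow> I (step i s e)" and endpass: "\<And>i s. I s \<Longrightarrow> I (endpass i s)"
    and "I s"
  shows "run_passes (\<lambda>i t e. enc (step i (dec t) e)) (\<lambda>i t. enc (endpass i (dec t))) xs k (enc s)
    = enc (run_passes step endpass xs k s)"
proof (induction k)
  case (Suc k)
  have "I (run_passes step endpass xs k s)"
    using run_passes_invariant[of I step endpass] step endpass \<open>I s\<close> by blast
  moreover have "I (fold (\<lambda>e t. step k t e) xs (run_passes step endpass xs k s))"
    using calculation step by (simp add: fold_invariant[where Q = "\<lambda>_. True"])
  ultimately show ?case
    using Suc fold_simulation[of I dec enc "step k"] dec_enc step by simp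
qed simp

lemma det_stream_alg_IndSub_coP3I:
  fixes init :: 's and enc :: "'s \<Rightarrow> bool list" and step :: "nat \<Rightarrow> 's \<Rightarrow> nat set \<Rightarrow> 's"
  assumes dec_enc: "\<And>s. I s \<Longrightarrow> dec (enc s) = s" and length_enc: "\<And>s. length (enc s) = S"
    and step: "\<And>i s e. I s \<Longrightarrow> I (step i s e)" and endpass: "\<And>i s. I s \<Longrightarrow> I (endpass i s)"
    and init: "I init"
    and correct: "\<And>xs. valid_stream n xs \<Longrightarrow>
      (case out (run_passes step endpass xs p init) of
         None \<Rightarrow> \<not> (\<exists>T. is_induced_coP3 n (set xs) T)
       | Some T \<Rightarrow> is_induced_coP3 n (set xs) T)"
  shows "det_stream_alg_IndSub_coP3 n p S"
  unfolding det_stream_alg_IndSub_coP3_def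
proof (intro exI conjI)
  show "uses_space S (enc init) (\<lambda>i t e. enc (step i (dec t) e)) (\<lambda>i t. enc (endpass i (dec t)))"
    by (simp add: uses_space_def length_enc)
  have "out (dec (run_passes (\<lambda>i t e. enc (step i (dec t) e)) (\<lambda>i t. enc (endpass i (dec t))) xs p
      (enc init))) = out (run_passes step endpass xs p init)" for xs
    using run_passes_simulation[of I dec enc step endpass, OF dec_enc step endpass init]
      run_passes_invariant[of I step endpass, OF step endpass init] dec_enc by simp
  then show "solves_IndSub_coP3 n p (enc init) (\<lambda>i t e. enc (step i (dec t) e))
      (\<lambda>i t. enc (endpass i (dec t))) (out \<circ> dec)"
    using correct by (simp add: solves_IndSub_coP3_def)
qed

section \<open>Least non-neighbours and induced copies of co-P3\<close>

locale edge_stream =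
  fixes n :: nat and xs :: "nat set list"
  assumes valid: "valid_stream n xs"
begin

definition adj :: "nat \<Rightarrow> nat \<Rightarrow> bool" where
  "adj u w \<longleftrightarrow> {u, w} \<in> set xs"

definition degree :: "nat \<Rightarrow> nat" where
  "degree v = card {w. adj v w}"

definition least_nonnbr :: "nat \<Rightarrow> nat" where
  "least_nonnbr v = (LEAST w. \<not> adj v w)"

definition part :: "nat \<Rightarrow> nat set" where
  "part v = {w. w < n \<and> least_nonnbr w = least_nonnbr v}"

lemma edge_eq_Min_Max:
  assumes "e \<in> set xs"
  shows "{Min e, Max e} = e" and "Min e < Max e" and "Max e < n"
proof -
  obtain u v where uv: "u \<noteq> v" "u < n" "v < n" "e = {u, v}"
    using assms valid unfolding valid_stream_def by blast
  then have "Min e = min u v" and "Max e = max u v"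
    by simp_all
  with uv show "{Min e, Max e} = e" "Min e < Max e" "Max e < n"
    by (auto simp: min_def max_def)
qed

lemma adj_Min_Max: "e \<in> set xs \<Longrightarrow> adj (Min e) (Max e)"
  using edge_eq_Min_Max(1) by (simp add: adj_def)

lemma adj_sym: "adj u w \<longleftrightarrow> adj w u"
  by (simp add: adj_def insert_commute)

lemma adjD: "adj u w \<Longrightarrow> u \<noteq> w \<and> u < n \<and> w < n"
  using edge_eq_Min_Max(2,3)[of "{u, w}"] by (auto simp: adj_def)

lemma not_adj_self: "\<not> adj v v"
  using adjD by blast

lemma is_induced_coP3_iff:
  "is_induced_coP3 n (set xs) T \<longleftrightarrow> (\<exists>a b c. a < n \<and> b < n \<and> c < n \<and>
      a \<noteq> b \<and> a \<noteq> c \<and> b \<noteq> c \<and> adj a b \<and> \<not> adj a c \<and> \<not> adj b c \<and> T = {a, b, c})"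
  by (simp add: is_induced_coP3_def adj_def)

lemma length_filter_edges_at:
  "length (filter (\<lambda>e. \<exists>w. R w \<and> e = {v, w}) xs) = card {w. R w \<and> adj v w}"
proof -
  have "distinct xs"
    using valid by (simp add: valid_stream_def)
  then have "length (filter (\<lambda>e. \<exists>w. R w \<and> e = {v, w}) xs)
      = card ((\<lambda>w. {v, w}) ` {w. R w \<and> adj v w})"
  proof (subst distinct_card[symmetric])
    show "card (set (filter (\<lambda>e. \<exists>w. R w \<and> e = {v, w}) xs))
        = card ((\<lambda>w. {v, w}) ` {w. R w \<and> adj v w})"
      by (rule arg_cong[where f = card]) (auto simp: adj_def)
  qed simp_all
  also have "\<dots> = card {w. R w \<and> adj v w}"
    by (rule card_image) (auto simp: inj_on_def doubleton_eq_iff)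
  finally show ?thesis .
qed

lemma card_nbrs_le: "card {w. R w \<and> adj v w} \<le> n"
  using card_mono[of "{..<n}" "{w. R w \<and> adj v w}"] adjD by auto

lemma least_nonnbr_le: "least_nonnbr v \<le> v"
  unfolding least_nonnbr_def using not_adj_self by (rule Least_le)

lemma least_nonnbr_less: "v < n \<Longrightarrow> least_nonnbr v < n"
  using least_nonnbr_le[of v] by simp

lemma not_adj_least_nonnbr: "\<not> adj v (least_nonnbr v)"
  unfolding least_nonnbr_def using not_adj_self by (rule LeastI)

lemma adj_less_least_nonnbr: "w < least_nonnbr v \<Longrightarrow> adj v w"
  unfolding least_nonnbr_def using not_less_Least by blast

text \<open>The comparison that drives the binary search for the least non-neighbour.\<close>

lemma card_nbrs_below_less_iff: "card {w. w < t \<and> adj v w} < t \<longleftrightarrow> least_nonnbr v < t"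
proof
  assume "least_nonnbr v < t"
  then have "{w. w < t \<and> adj v w} \<subseteq> {..<t} - {least_nonnbr v}"
    using not_adj_least_nonnbr by auto
  then have "card {w. w < t \<and> adj v w} \<le> card ({..<t} - {least_nonnbr v})"
    by (intro card_mono) simp_all
  then show "card {w. w < t \<and> adj v w} < t"
    using \<open>least_nonnbr v < t\<close> by simp
next
  assume "card {w. w < t \<and> adj v w} < t"
  show "least_nonnbr v < t"
  proof (rule ccontr)
    assume "\<not> least_nonnbr v < t"
    then have "{w. w < t \<and> adj v w} = {..<t}"
      using adj_less_least_nonnbr by auto
    with \<open>card {w. w < t \<and> adj v w} < t\<close> show False by simp
  qed
qed

lemma induced_coP3_edge_in_part:
  assumes "adj a b" and "least_nonnbr a = least_nonnbr b"
  shows "is_induced_coP3 n (set xs) {a, b, least_nonnbr a}"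
proof -
  have "\<not> adj a (least_nonnbr a)" and "\<not> adj b (least_nonnbr a)"
    using not_adj_least_nonnbr assms(2) by metis+
  with assms(1) show ?thesis
    unfolding is_induced_coP3_iff using adjD[OF assms(1)] least_nonnbr_less[of a]
    by (intro exI[of _ a] exI[of _ b] exI[of _ "least_nonnbr a"]) (auto simp: adj_sym)
qed

lemma induced_coP3_across_parts:
  assumes "v < n" "w < n" and "\<not> adj v w" and "least_nonnbr w \<noteq> least_nonnbr v"
  shows "is_induced_coP3 n (set xs) {v, w, min (least_nonnbr v) (least_nonnbr w)}"
proof -
  have *: "is_induced_coP3 n (set xs) {a, b, least_nonnbr b}"
    if "a < n" "b < n" "\<not> adj a b" "least_nonnbr b < least_nonnbr a" for a b
  proof -
    have "adj a (least_nonnbr b)"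
      using adj_less_least_nonnbr that(4) by blast
    moreover have "\<not> adj b (least_nonnbr b)"
      by (rule not_adj_least_nonnbr)
    ultimately show ?thesis
      unfolding is_induced_coP3_iff using that adjD[of a "least_nonnbr b"]
      by (intro exI[of _ a] exI[of _ "least_nonnbr b"] exI[of _ b]) (auto simp: adj_sym)
  qed
  show ?thesis
  proof (cases "least_nonnbr w < least_nonnbr v")
    case True
    then show ?thesis using *[of v w] assms by simp
  next
    case False
    then have "is_induced_coP3 n (set xs) {w, v, least_nonnbr v}"
      using *[of w v] assms by (simp add: adj_sym)
    then show ?thesis using False by (simp add: insert_commute)
  qed
qed

lemma card_nonnbrs: "card {w. w < n \<and> \<not> adj v w} + degree v = n"
proof -
  have "{w. adj v w} = {w. w < n \<and> adj v w}"
    using adjD by blast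
  then have "card {w. w < n \<and> \<not> adj v w} + degree v
      = card ({w. w < n \<and> \<not> adj v w} \<union> {w. w < n \<and> adj v w})"
    unfolding degree_def by (subst card_Un_disjoint) auto
  also have "{w. w < n \<and> \<not> adj v w} \<union> {w. w < n \<and> adj v w} = {..<n}"
    by auto
  finally show ?thesis
    by simp
qed

context
  assumes parts_independent: "\<And>a b. adj a b \<Longrightarrow> least_nonnbr a \<noteq> least_nonnbr b"
begin

lemma part_subset_nonnbrs: "part v \<subseteq> {w. w < n \<and> \<not> adj v w}"
  using parts_independent by (force simp: part_def)

lemma part_eq_nonnbrs:
  assumes "degree v + card (part v) = n"
  shows "part v = {w. w < n \<and> \<not> adj v w}"
  using part_subset_nonnbrs[of v] card_nonnbrs[of v] assms
  by (intro card_subset_eq) auto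

lemma no_induced_coP3:
  assumes "\<forall>v<n. degree v + card (part v) = n"
  shows "\<not> (\<exists>T. is_induced_coP3 n (set xs) T)"
proof
  assume "\<exists>T. is_induced_coP3 n (set xs) T"
  then obtain a b c where abc: "a < n" "b < n" "c < n" "adj a b" "\<not> adj a c" "\<not> adj b c"
    unfolding is_induced_coP3_iff by blast
  then have "c \<in> part a" and "c \<in> part b"
    using part_eq_nonnbrs assms by auto
  then have "least_nonnbr a = least_nonnbr b"
    by (simp add: part_def)
  with abc(4) show False
    using parts_independent by blast
qed

lemma nonnbr_outside_part:
  assumes "degree v + card (part v) \<noteq> n"
  shows "\<exists>w<n. \<not> adj v w \<and> least_nonnbr w \<noteq> least_nonnbr v"
proof (rule ccontr)
  assume "\<not> ?thesis"
  then have "{w. w < n \<and> \<not> adj v w} \<subseteq> part v"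
    by (auto simp: part_def)
  then have "part v = {w. w < n \<and> \<not> adj v w}"
    using part_subset_nonnbrs by blast
  then show False
    using card_nonnbrs[of v] assms by simp
qed

end

end

text \<open>Every cell of the state stores a number at most n + 2, and the binary search for the least
  non-neighbours, which lie below n, takes one pass per bit.\<close>

definition cell_width :: "nat \<Rightarrow> nat" where
  "cell_width n = floorlog 2 (n + 2)"

lemma less_two_power_cell_width: "n + 2 < 2 ^ cell_width n"
  using floorlog_bounds[of "n + 2" 2] by (simp add: cell_width_def)

datatype verdict = Undecided | Bad_Edge nat nat | Bad_Vertex nat

record state =
  bounds :: "nat list"
  counts :: "nat list"
  verdict :: verdict

text \<open>The caps at n + 2 are never reached on a valid stream; they keep the cells of arbitrary
  states within the cell width.\<close>

definition count_step :: "nat \<Rightarrow> (nat \<Rightarrow> nat \<Rightarrow> bool) \<Rightarrow> nat set \<Rightarrow> nat list \<Rightarrow> nat list" where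
  "count_step n R e c =
     map (\<lambda>v. if \<exists>w. R v w \<and> e = {v, w} then min (Suc (c ! v)) (n + 2) else c ! v) [0..<n]"

definition threshold :: "nat \<Rightarrow> nat \<Rightarrow> nat list \<Rightarrow> nat \<Rightarrow> nat" where
  "threshold n r l v = l ! v + 2 ^ (cell_width n - Suc r)"

definition in_one_part :: "nat \<Rightarrow> nat list \<Rightarrow> nat set \<Rightarrow> bool" where
  "in_one_part n l e \<longleftrightarrow> Min e < n \<and> Max e < n \<and> l ! Min e = l ! Max e"

definition check_edge :: "nat \<Rightarrow> nat list \<Rightarrow> nat set \<Rightarrow> verdict \<Rightarrow> verdict" where
  "check_edge n l e V = (if V = Undecided \<and> in_one_part n l e then Bad_Edge (Min e) (Max e) else V)"

text \<open>The counters are reused in every pass: in a search pass \<open>i < cell_width n\<close> vertex v counts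
  its neighbours below its current threshold, in pass \<open>cell_width n\<close> all its neighbours, and in
  the last pass its adjacency to the bad vertex.\<close>

definition counted_nbr :: "nat \<Rightarrow> nat \<Rightarrow> state \<Rightarrow> nat \<Rightarrow> nat \<Rightarrow> bool" where
  "counted_nbr n i s v w \<longleftrightarrow>
     (if i < cell_width n then w < threshold n i (bounds s) v else i = cell_width n \<or> verdict s = Bad_Vertex w)"

definition stream_step :: "nat \<Rightarrow> nat \<Rightarrow> state \<Rightarrow> nat set \<Rightarrow> state" where
  "stream_step n i s e = s\<lparr>counts := count_step n (counted_nbr n i s) e (counts s),
     verdict := (if i = cell_width n then check_edge n (bounds s) e (verdict s) else verdict s)\<rparr>"

text \<open>Run when the counters hold the degrees and the bounds the least non-neighbours: v is bad
  iff its part is not its whole non-neighbourhood.\<close>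

definition bad_vertex :: "nat \<Rightarrow> state \<Rightarrow> verdict" where
  "bad_vertex n s =
     (case find (\<lambda>v. counts s ! v + count_list (bounds s) (bounds s ! v) \<noteq> n) [0..<n] of
        None \<Rightarrow> Undecided
      | Some v \<Rightarrow> Bad_Vertex v)"

definition end_pass :: "nat \<Rightarrow> nat \<Rightarrow> state \<Rightarrow> state" where
  "end_pass n i s =
    (if i < cell_width n then
       s\<lparr>bounds := map (\<lambda>v. let t = threshold n i (bounds s) v in
           if counts s ! v < t then bounds s ! v else min t (n + 2)) [0..<n],
         counts := replicate n 0\<rparr>
     else if i = cell_width n then
       s\<lparr>counts := replicate n 0,
         verdict := (if verdict s = Undecided then bad_vertex n s else verdict s)\<rparr>
     else s)"

definition initial_state :: "nat \<Rightarrow> state" where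
  "initial_state n = \<lparr>bounds = replicate n 0, counts = replicate n 0, verdict = Undecided\<rparr>"

definition answer :: "nat \<Rightarrow> state \<Rightarrow> nat set option" where
  "answer n s = (case verdict s of
       Undecided \<Rightarrow> None
     | Bad_Edge a b \<Rightarrow> Some {a, b, bounds s ! a}
     | Bad_Vertex v \<Rightarrow> map_option (\<lambda>w. {v, w, min (bounds s ! v) (bounds s ! w)})
         (find (\<lambda>w. counts s ! w = 0 \<and> bounds s ! w \<noteq> bounds s ! v) [0..<n]))"

fun verdict_cells :: "verdict \<Rightarrow> nat list" where
  "verdict_cells Undecided = [0, 0, 0]"
| "verdict_cells (Bad_Edge a b) = [1, a, b]"
| "verdict_cells (Bad_Vertex v) = [2, v, 0]"

definition verdict_of_cells :: "nat list \<Rightarrow> verdict" where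
  "verdict_of_cells cs =
     (if cs ! 0 = 1 then Bad_Edge (cs ! 1) (cs ! 2) else if cs ! 0 = 2 then Bad_Vertex (cs ! 1)
      else Undecided)"

definition state_cells :: "state \<Rightarrow> nat list" where
  "state_cells s = bounds s @ counts s @ verdict_cells (verdict s)"

definition state_of_cells :: "nat \<Rightarrow> nat list \<Rightarrow> state" where
  "state_of_cells n cs = \<lparr>bounds = take n cs, counts = take n (drop n cs),
     verdict = verdict_of_cells (drop (2 * n) cs)\<rparr>"

definition wf_state :: "nat \<Rightarrow> state \<Rightarrow> bool" where
  "wf_state n s \<longleftrightarrow> length (bounds s) = n \<and> length (counts s) = n \<and>
     (\<forall>x\<in>set (state_cells s). x \<le> n + 2)"

definition memory_bits :: "nat \<Rightarrow> nat" where
  "memory_bits n = (2 * n + 3) * cell_width n"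

definition encode_state :: "nat \<Rightarrow> state \<Rightarrow> bool list" where
  "encode_state n s = encode_cells (memory_bits n) (cell_width n) (state_cells s)"

definition decode_state :: "nat \<Rightarrow> bool list \<Rightarrow> state" where
  "decode_state n bs = state_of_cells n (decode_cells (cell_width n) (2 * n + 3) bs)"

lemma verdict_of_cells_verdict_cells [simp]: "verdict_of_cells (verdict_cells V) = V"
  by (cases V) (simp_all add: verdict_of_cells_def)

lemma length_verdict_cells [simp]: "length (verdict_cells V) = 3"
  by (cases V) simp_all

lemma decode_encode_state:
  assumes "wf_state n s"
  shows "decode_state n (encode_state n s) = s"
proof -
  have "length (state_cells s) = 2 * n + 3"
    using assms by (simp add: wf_state_def state_cells_def)
  moreover have "\<forall>x\<in>set (state_cells s). x < 2 ^ cell_width n"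
    using assms less_two_power_cell_width[of n] by (auto simp: wf_state_def)
  ultimately have "decode_cells (cell_width n) (2 * n + 3) (encode_state n s) = state_cells s"
    using decode_encode_cells[of "state_cells s" "cell_width n" "memory_bits n"]
    by (simp add: encode_state_def memory_bits_def)
  then show ?thesis
    using assms by (simp add: decode_state_def state_of_cells_def state_cells_def wf_state_def)
qed

lemma length_count_step [simp]: "length (count_step n R e c) = n"
  by (simp add: count_step_def)

lemma wf_state_initial_state: "wf_state n (initial_state n)"
  by (simp add: wf_state_def initial_state_def state_cells_def)

lemma wf_state_stream_step: "wf_state n s \<Longrightarrow> wf_state n (stream_step n i s e)"
  by (cases "verdict s")
    (auto simp: wf_state_def state_cells_def stream_step_def count_step_def check_edge_def
      in_one_part_def)

lemma wf_state_end_pass: "wf_state n s \<Longrightarrow> wf_state n (end_pass n i s)"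
  by (cases "verdict s")
    (auto simp: wf_state_def state_cells_def end_pass_def bad_vertex_def Let_def
      split: option.splits dest!: find_Some_iff[THEN iffD1])

lemma length_fold_count_step: "length c = n \<Longrightarrow> length (fold (count_step n R) ys c) = n"
  by (induction ys arbitrary: c) simp_all

lemma nth_fold_count_step:
  assumes "length c = n" and "v < n" and "c ! v \<le> n + 2"
  shows "fold (count_step n R) ys c ! v
    = min (c ! v + length (filter (\<lambda>e. \<exists>w. R v w \<and> e = {v, w}) ys)) (n + 2)"
  using assms
proof (induction ys arbitrary: c)
  case (Cons y ys)
  let ?P = "\<lambda>e. \<exists>w. R v w \<and> e = {v, w}"
  define d :: nat where "d = (if ?P y then 1 else 0)"
  have step: "count_step n R y c ! v = min (c ! v + d) (n + 2)"
    using Cons.prems by (auto simp: count_step_def d_def)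
  then have "fold (count_step n R) (y # ys) c ! v
      = min (min (c ! v + d) (n + 2) + length (filter ?P ys)) (n + 2)"
    using Cons by simp
  also have "\<dots> = min (c ! v + (d + length (filter ?P ys))) (n + 2)"
    by (simp add: min_def)
  finally show ?case
    by (auto simp: d_def)
qed simp

lemma fold_check_edge:
  "fold (check_edge n l) ys Undecided =
     (case find (in_one_part n l) ys of None \<Rightarrow> Undecided | Some e \<Rightarrow> Bad_Edge (Min e) (Max e))"
proof -
  have "fold (check_edge n l) ys V = V" if "V \<noteq> Undecided" for V ys
    using that by (induction ys) (simp_all add: check_edge_def)
  then show ?thesis
    by (induction ys) (simp_all add: check_edge_def)
qed

lemma counted_nbr_stream_step: "counted_nbr n i (stream_step n i s e) = counted_nbr n i s"
  by (simp add: fun_eq_iff counted_nbr_def stream_step_def)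

lemma fold_stream_step:
  "fold (\<lambda>e t. stream_step n i t e) ys s =
     s\<lparr>counts := fold (count_step n (counted_nbr n i s)) ys (counts s),
       verdict := (if i = cell_width n then fold (check_edge n (bounds s)) ys (verdict s) else verdict s)\<rparr>"
proof (induction ys arbitrary: s)
  case (Cons y ys)
  then show ?case
    by (simp add: counted_nbr_stream_step) (simp add: stream_step_def)
qed simp

context edge_stream
begin

lemma fold_count_step_stream:
  "fold (count_step n R) xs (replicate n 0) = map (\<lambda>v. card {w. R v w \<and> adj v w}) [0..<n]"
proof (rule nth_equalityI)
  fix v assume "v < length (fold (count_step n R) xs (replicate n 0))"
  then have "v < n"
    by (simp add: length_fold_count_step)
  moreover have "card {w. R v w \<and> adj v w} \<le> n + 2"
    using card_nbrs_le[of "R v" v] by simp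
  ultimately show "fold (count_step n R) xs (replicate n 0) ! v
      = map (\<lambda>v. card {w. R v w \<and> adj v w}) [0..<n] ! v"
    by (simp add: nth_fold_count_step length_filter_edges_at)
qed (simp add: length_fold_count_step)

definition brackets :: "nat \<Rightarrow> nat list \<Rightarrow> bool" where
  "brackets r l \<longleftrightarrow> length l = n \<and>
     (\<forall>v<n. l ! v \<le> least_nonnbr v \<and> least_nonnbr v < l ! v + 2 ^ (cell_width n - r))"

lemma search_pass:
  assumes "r < cell_width n" and "brackets r l"
  shows "\<exists>l'. end_pass n r (fold (\<lambda>e t. stream_step n r t e) xs
      \<lparr>bounds = l, counts = replicate n 0, verdict = Undecided\<rparr>)
    = \<lparr>bounds = l', counts = replicate n 0, verdict = Undecided\<rparr> \<and> brackets (Suc r) l'"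
proof -
  let ?s = "\<lparr>bounds = l, counts = replicate n 0, verdict = Undecided\<rparr>"
  let ?t = "threshold n r l"
  define l' where "l' = map (\<lambda>v. if least_nonnbr v < ?t v then l ! v else ?t v) [0..<n]"
  have "counted_nbr n r ?s = (\<lambda>v w. w < ?t v)"
    using assms(1) by (simp add: fun_eq_iff counted_nbr_def)
  then have "fold (\<lambda>e t. stream_step n r t e) xs ?s
      = ?s\<lparr>counts := map (\<lambda>v. card {w. w < ?t v \<and> adj v w}) [0..<n]\<rparr>"
    using assms(1) by (simp add: fold_stream_step fold_count_step_stream)
  moreover have "?t v \<le> n + 2" if "v < n" "\<not> least_nonnbr v < ?t v" for v
    using that least_nonnbr_less[of v] by linarith
  ultimately have "end_pass n r (fold (\<lambda>e t. stream_step n r t e) xs ?s)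
      = \<lparr>bounds = l', counts = replicate n 0, verdict = Undecided\<rparr>"
    using assms(1) by (auto simp: end_pass_def l'_def Let_def card_nbrs_below_less_iff)
  moreover have "brackets (Suc r) l'"
  proof -
    have "(2::nat) ^ (cell_width n - r) = 2 ^ (cell_width n - Suc r) + 2 ^ (cell_width n - Suc r)"
      using assms(1) by (metis Suc_diff_Suc mult_2 power_Suc)
    then show ?thesis
      using assms(2) by (auto simp: brackets_def l'_def threshold_def)
  qed
  ultimately show ?thesis
    by blast
qed

lemma run_search:
  "r \<le> cell_width n \<Longrightarrow> \<exists>l. run_passes (stream_step n) (end_pass n) xs r (initial_state n)
    = \<lparr>bounds = l, counts = replicate n 0, verdict = Undecided\<rparr> \<and> brackets r l"
proof (induction r)
  case 0
  have "least_nonnbr v < 2 ^ cell_width n" if "v < n" for v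
    using least_nonnbr_less[OF that] less_two_power_cell_width[of n] by linarith
  then show ?case
    by (simp add: initial_state_def brackets_def)
next
  case (Suc r)
  then show ?case
    using search_pass by fastforce
qed

lemma run_search_complete:
  "run_passes (stream_step n) (end_pass n) xs (cell_width n) (initial_state n)
    = \<lparr>bounds = map least_nonnbr [0..<n], counts = replicate n 0, verdict = Undecided\<rparr>"
proof -
  obtain l where run: "run_passes (stream_step n) (end_pass n) xs (cell_width n) (initial_state n)
      = \<lparr>bounds = l, counts = replicate n 0, verdict = Undecided\<rparr>" and "brackets (cell_width n) l"
    using run_search by blast
  then have "l = map least_nonnbr [0..<n]"
    by (intro nth_equalityI) (auto simp: brackets_def)
  then show ?thesis
    using run by simp
qed

lemma count_list_least_nonnbrs:
  "v < n \<Longrightarrow> count_list (map least_nonnbr [0..<n]) (least_nonnbr v) = card (part v)"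
proof -
  have "count_list (map least_nonnbr [0..<n]) (least_nonnbr v)
      = card {w. w < n \<and> least_nonnbr v = least_nonnbr w}"
    unfolding count_list_eq_length_filter length_filter_conv_card
    by (intro arg_cong[where f = card]) auto
  also have "\<dots> = card (part v)"
    by (rule arg_cong[where f = card]) (auto simp: part_def)
  finally show ?thesis .
qed

definition final_verdict :: verdict where
  "final_verdict = (case find (in_one_part n (map least_nonnbr [0..<n])) xs of
       Some e \<Rightarrow> Bad_Edge (Min e) (Max e)
     | None \<Rightarrow> (case find (\<lambda>v. degree v + card (part v) \<noteq> n) [0..<n] of
         None \<Rightarrow> Undecided
       | Some v \<Rightarrow> Bad_Vertex v))"

definition final_state :: state where
  "final_state = \<lparr>bounds = map least_nonnbr [0..<n],
     counts = map (\<lambda>w. card {u. final_verdict = Bad_Vertex u \<and> adj w u}) [0..<n],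
     verdict = final_verdict\<rparr>"

lemma final_state_simps [simp]:
  "bounds final_state = map least_nonnbr [0..<n]"
  "counts final_state = map (\<lambda>w. card {u. final_verdict = Bad_Vertex u \<and> adj w u}) [0..<n]"
  "verdict final_state = final_verdict"
  by (simp_all add: final_state_def)

lemma run_passes_final:
  "run_passes (stream_step n) (end_pass n) xs (cell_width n + 2) (initial_state n) = final_state"
proof -
  let ?L = "map least_nonnbr [0..<n]"
  let ?V = "fold (check_edge n ?L) xs Undecided"
  have "counted_nbr n (cell_width n) s = (\<lambda>_ _. True)" for s
    by (simp add: fun_eq_iff counted_nbr_def)
  then have "fold (\<lambda>e t. stream_step n (cell_width n) t e) xs
      (run_passes (stream_step n) (end_pass n) xs (cell_width n) (initial_state n))
    = \<lparr>bounds = ?L, counts = map degree [0..<n], verdict = ?V\<rparr>"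
    by (simp add: run_search_complete fold_stream_step fold_count_step_stream degree_def)
  moreover have "find (\<lambda>v. map degree [0..<n] ! v + count_list ?L (?L ! v) \<noteq> n) [0..<n]
      = find (\<lambda>v. degree v + card (part v) \<noteq> n) [0..<n]"
    by (rule find_cong) (simp_all add: count_list_least_nonnbrs)
  ultimately have "run_passes (stream_step n) (end_pass n) xs (Suc (cell_width n)) (initial_state n)
      = \<lparr>bounds = ?L, counts = replicate n 0, verdict = final_verdict\<rparr>"
    by (simp add: end_pass_def bad_vertex_def final_verdict_def fold_check_edge
        split: option.split)
  moreover have "counted_nbr n (Suc (cell_width n)) s = (\<lambda>w u. verdict s = Bad_Vertex u)" for s
    by (simp add: fun_eq_iff counted_nbr_def)
  ultimately show ?thesis
    by (simp add: fold_stream_step fold_count_step_stream end_pass_def final_state_def)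
qed

lemma parts_independent_if_no_edge_in_part:
  assumes "find (in_one_part n (map least_nonnbr [0..<n])) xs = None" and "adj a b"
  shows "least_nonnbr a \<noteq> least_nonnbr b"
proof -
  let ?e = "{a, b}"
  have e: "?e \<in> set xs"
    using assms(2) by (simp add: adj_def)
  then have "\<not> in_one_part n (map least_nonnbr [0..<n]) ?e"
    using assms(1) by (simp add: find_None_iff)
  moreover have "Min ?e < n" and "Max ?e < n"
    using edge_eq_Min_Max(2,3)[OF e] by linarith+
  ultimately have "least_nonnbr (Min ?e) \<noteq> least_nonnbr (Max ?e)"
    by (simp add: in_one_part_def)
  then show ?thesis
    by (cases "a \<le> b") (simp_all add: max_def min_def)
qed

lemma answer_final_state:
  "case answer n final_state of
     None \<Rightarrow> \<not> (\<exists>T. is_induced_coP3 n (set xs) T)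
   | Some T \<Rightarrow> is_induced_coP3 n (set xs) T"
proof (cases "find (in_one_part n (map least_nonnbr [0..<n])) xs")
  case (Some e)
  then have e: "e \<in> set xs" and "in_one_part n (map least_nonnbr [0..<n]) e"
    by (auto simp: find_Some_iff)
  moreover have "Min e < n"
    using edge_eq_Min_Max(2,3)[OF e] by linarith
  ultimately have "least_nonnbr (Min e) = least_nonnbr (Max e)"
    by (simp add: in_one_part_def)
  then have "is_induced_coP3 n (set xs) {Min e, Max e, least_nonnbr (Min e)}"
    by (rule induced_coP3_edge_in_part[OF adj_Min_Max[OF e]])
  moreover have "final_verdict = Bad_Edge (Min e) (Max e)"
    using Some by (simp add: final_verdict_def)
  ultimately show ?thesis
    using \<open>Min e < n\<close> by (simp add: answer_def)
next
  case None
  note independent = parts_independent_if_no_edge_in_part[OF None]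
  show ?thesis
  proof (cases "find (\<lambda>v. degree v + card (part v) \<noteq> n) [0..<n]")
    case None
    then have "final_verdict = Undecided"
      using \<open>find _ xs = None\<close> by (simp add: final_verdict_def)
    moreover have "\<forall>v<n. degree v + card (part v) = n"
      using None by (simp add: find_None_iff)
    ultimately show ?thesis
      using no_induced_coP3[OF independent] by (simp add: answer_def)
  next
    case (Some v)
    then have bad_vertex: "final_verdict = Bad_Vertex v"
      using \<open>find _ xs = None\<close> by (simp add: final_verdict_def)
    have v: "v < n" "degree v + card (part v) \<noteq> n"
      using Some by (auto simp: find_Some_iff)
    let ?P = "\<lambda>w. \<not> adj v w \<and> least_nonnbr w \<noteq> least_nonnbr v"
    have "{u. final_verdict = Bad_Vertex u \<and> adj w u} = (if adj v w then {v} else {})" for w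
      using bad_vertex by (auto simp: adj_sym)
    then have "find (\<lambda>w. counts final_state ! w = 0
        \<and> bounds final_state ! w \<noteq> bounds final_state ! v) [0..<n] = find ?P [0..<n]"
      by (intro find_cong) (simp_all add: v(1))
    moreover obtain w where w: "find ?P [0..<n] = Some w"
      using nonnbr_outside_part[OF independent v(2)] by (fastforce simp: find_None_iff)
    moreover have "w < n" and "?P w"
      using w by (auto simp: find_Some_iff)
    ultimately have "answer n final_state = Some {v, w, min (least_nonnbr v) (least_nonnbr w)}"
      using v(1) by (simp add: answer_def bad_vertex)
    then show ?thesis
      using induced_coP3_across_parts \<open>w < n\<close> \<open>?P w\<close> v(1) by simp
  qed
qed

theorem answer_correct:
  "case answer n (run_passes (stream_step n) (end_pass n) xs (cell_width n + 2) (initial_state n)) of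
     None \<Rightarrow> \<not> (\<exists>T. is_induced_coP3 n (set xs) T)
   | Some T \<Rightarrow> is_induced_coP3 n (set xs) T"
  unfolding run_passes_final by (rule answer_final_state)

end

lemma det_stream_alg_IndSub_coP3_cell_width:
  "det_stream_alg_IndSub_coP3 n (cell_width n + 2) (memory_bits n)"
proof (rule det_stream_alg_IndSub_coP3I)
  show "\<And>s. wf_state n s \<Longrightarrow> decode_state n (encode_state n s) = s"
    by (rule decode_encode_state)
  show "\<And>s. length (encode_state n s) = memory_bits n"
    by (simp add: encode_state_def)
  show "\<And>xs. valid_stream n xs \<Longrightarrow>
      case answer n (run_passes (stream_step n) (end_pass n) xs (cell_width n + 2) (initial_state n)) of
        None \<Rightarrow> \<not> (\<exists>T. is_induced_coP3 n (set xs) T)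
      | Some T \<Rightarrow> is_induced_coP3 n (set xs) T"
    by (rule edge_stream.answer_correct) (rule edge_stream.intro)
qed (simp_all add: wf_state_stream_step wf_state_end_pass wf_state_initial_state)

lemma cell_width_le_log: "real (cell_width n) \<le> log 2 (real n + 2) + 1"
proof -
  have "log 2 (real n + 2) \<ge> 1"
    by simp
  then show ?thesis
    by (simp add: cell_width_def floorlog_def add.commute)
qed

lemma passes_bigo_ln: "(\<lambda>n. real (cell_width n + 2)) \<in> O(\<lambda>n. ln (real n))"
proof -
  have "norm (real (cell_width n + 2)) \<le> 1 * norm (log 2 (real n + 2) + 3)" for n
    using cell_width_le_log[of n] by simp
  then have "(\<lambda>n. real (cell_width n + 2)) \<in> O(\<lambda>n. log 2 (real n + 2) + 3)"
    by (intro bigoI always_eventually allI)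
  also have "(\<lambda>n::nat. log 2 (real n + 2) + 3) \<in> O(\<lambda>n. ln (real n))"
    by real_asymp
  finally show ?thesis .
qed

lemma memory_bits_bigo: "(\<lambda>n. real (memory_bits n)) \<in> O(\<lambda>n. real n * ln (real n))"
proof -
  have "(\<lambda>n. real (memory_bits n)) \<in> O(\<lambda>n. (2 * real n + 3) * (log 2 (real n + 2) + 1))"
    using cell_width_le_log
    by (intro bigoI[where c = 1] always_eventually allI) (simp add: memory_bits_def mult_left_mono)
  also have "(\<lambda>n::nat. (2 * real n + 3) * (log 2 (real n + 2) + 1)) \<in> O(\<lambda>n. real n * ln (real n))"
    by real_asymp
  finally show ?thesis .
qed

theorem corollary26:
  shows "\<exists>(p :: nat \<Rightarrow> nat) (S :: nat \<Rightarrow> nat) (k :: nat).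
           (\<lambda>n. real (p n)) \<in> O(\<lambda>n. ln (real n)) \<and>
           (\<lambda>n. real (S n)) \<in> O(\<lambda>n. real n * ln (real n) ^ k) \<and>
           (\<forall>n. det_stream_alg_IndSub_coP3 n (p n) (S n))"
  using passes_bigo_ln memory_bits_bigo det_stream_alg_IndSub_coP3_cell_width
  by (intro exI[of _ "\<lambda>n. cell_width n + 2"] exI[of _ memory_bits] exI[of _ 1]) simp

end
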